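(* Let $k\geq 1$ and $n\geq k+2$ be integers. For any $k$-tree $T_n$ with $n$ vertices, the Smith normal form of its $k$-distance matrix is $$\operatorname{SNF}({\sf D}^{k}(T_n))={\sf I}_{(k-1)(n-k)+2}\oplus (k+1){\sf I}_{n-k-2}\oplus [k(k+1)(n-k)].$$
   Context: A $k$-tree is either the complete graph on $k$ vertices, or a graph obtained from a smaller $k$-tree by adding a new vertex joined by $k$ edges to all vertices of a $k$-clique (complete subgraph on $k$ vertices). In a $k$-tree $T$, two distinct $k$-cliques are adjacent if both are contained in a common $(k+1)$-clique. For $k$-cliques $\tau,\tau'$, a $k$-walk from $\tau$ to $\tau'$ is a sequence $\tau_1\sigma_1\tau_2\sigma_2\cdots\tau_l$ with $\tau_1=\tau$, $\tau_l=\tau'$, the $\tau_i$ being $k$-cliques and $\sigma_i$ a $(k+1)$-clique containing both $\tau_i$ and $\tau_{i+1}$; the $k$-distance $\operatorname{dist}^k(\tau,\tau')$ is the number of $(k+1)$-cliques in a shortest such walk. If $T$ has $c$ $k$-cliques $\tau_1,\dots,\tau_c$ (in any fixed order), the $k$-distance matrix ${\sf D}^k(T)$ is the $c\times c$ integer matrix with $(i,j)$-entry $0$ if $i=j$ and $\operatorname{dist}^k(\tau_i,\tau_j)$ otherwise. The Smith normal form $\operatorname{SNF}({\sf M})$ of an integer matrix ${\sf M}$ is the unique diagonal matrix $\operatorname{diag}(f_1,\dots,f_r,0,\dots,0)$ with $f_i>0$, $f_i\mid f_{i+1}$, $r=\operatorname{rank}{\sf M}$, such that ${\sf M}={\sf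 P}\operatorname{SNF}({\sf M}){\sf Q}$ for some matrices ${\sf P},{\sf Q}$ invertible over $\mathbb{Z}$. ${\sf I}_m$ is the $m\times m$ identity matrix, $\oplus$ denotes block-diagonal sum, and $[x]$ is the $1\times 1$ matrix with entry $x$. *)

theory Defs
  imports "Jordan_Normal_Form.Matrix"
begin

text \<open>Simple graphs: a vertex set V and a set E of undirected edges (2-element sets).\<close>

definition is_clique :: "'a set set \<Rightarrow> 'a set \<Rightarrow> bool" where
  "is_clique E C \<longleftrightarrow> (\<forall>u\<in>C. \<forall>v\<in>C. u \<noteq> v \<longrightarrow> {u, v} \<in> E)"

definition complete_edges :: "'a set \<Rightarrow> 'a set set" where
  "complete_edges V = {{u, v} | u v. u \<in> V \<and> v \<in> V \<and> u \<noteq> v}"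

inductive ktree :: "nat \<Rightarrow> 'a set \<Rightarrow> 'a set set \<Rightarrow> bool" for k where
  base: "finite V \<Longrightarrow> card V = k \<Longrightarrow> ktree k V (complete_edges V)"
| step: "ktree k V E \<Longrightarrow> x \<notin> V \<Longrightarrow> C \<subseteq> V \<Longrightarrow> card C = k \<Longrightarrow> is_clique E C \<Longrightarrow>
         ktree k (insert x V) (E \<union> {{x, c} | c. c \<in> C})"

definition cliques :: "nat \<Rightarrow> 'a set \<Rightarrow> 'a set set \<Rightarrow> 'a set set" where
  "cliques m V E = {C. C \<subseteq> V \<and> finite C \<and> card C = m \<and> is_clique E C}"

definition kstep :: "nat \<Rightarrow> 'a set \<Rightarrow> 'a set set \<Rightarrow> 'a set \<Rightarrow> 'a set \<Rightarrow> bool" where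
  "kstep k V E \<tau> \<tau>' \<longleftrightarrow> \<tau> \<in> cliques k V E \<and> \<tau>' \<in> cliques k V E \<and>
     (\<exists>\<sigma>\<in>cliques (k+1) V E. \<tau> \<subseteq> \<sigma> \<and> \<tau>' \<subseteq> \<sigma>)"

text \<open>k-distance: number of (k+1)-cliques in a shortest k-walk.\<close>
definition kdist :: "nat \<Rightarrow> 'a set \<Rightarrow> 'a set set \<Rightarrow> 'a set \<Rightarrow> 'a set \<Rightarrow> nat" where
  "kdist k V E \<tau> \<tau>' = (LEAST m. (kstep k V E ^^ m) \<tau> \<tau>')"

definition kdist_mat :: "nat \<Rightarrow> 'a set \<Rightarrow> 'a set set \<Rightarrow> 'a set list \<Rightarrow> int mat" where
  "kdist_mat k V E cs = mat (length cs) (length cs)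
     (\<lambda>(i, j). if i = j then 0 else int (kdist k V E (cs ! i) (cs ! j)))"

definition smith_form :: "int mat \<Rightarrow> bool" where
  "smith_form S \<longleftrightarrow> (\<forall>i<dim_row S. \<forall>j<dim_col S. i \<noteq> j \<longrightarrow> S $$ (i, j) = 0) \<and>
     (\<exists>r \<le> min (dim_row S) (dim_col S).
        (\<forall>i<r. S $$ (i, i) > 0) \<and>
        (\<forall>i. i + 1 < r \<longrightarrow> S $$ (i, i) dvd S $$ (i + 1, i + 1)) \<and>
        (\<forall>i. r \<le> i \<and> i < min (dim_row S) (dim_col S) \<longrightarrow> S $$ (i, i) = 0))"

text \<open>S is the Smith normal form of M: S is in Smith form and M = P S Q with P, Q invertible
  over the integers. (By uniqueness of the SNF this characterises SNF(M).)\<close>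
definition is_SNF_of :: "int mat \<Rightarrow> int mat \<Rightarrow> bool" where
  "is_SNF_of M S \<longleftrightarrow> smith_form S \<and>
     (\<exists>P Q. P \<in> carrier_mat (dim_row M) (dim_row M) \<and> Q \<in> carrier_mat (dim_col M) (dim_col M) \<and>
        invertible_mat P \<and> invertible_mat Q \<and>
        S \<in> carrier_mat (dim_row M) (dim_col M) \<and> M = P * S * Q)"

definition diag3 :: "nat \<Rightarrow> nat \<Rightarrow> int \<Rightarrow> int \<Rightarrow> int mat" where
  "diag3 a b c d = mat (a + b + 1) (a + b + 1)
     (\<lambda>(i, j). if i \<noteq> j then 0 else if i < a then 1 else if i < a + b then c else d)"

end

theory Submission
  imports Defs
begin

(* Build the k-tree by attaching its vertices one at a time and reduce the k-distance matrix
   by unimodular row and column operations along the way. When a vertex is attached to a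
   k-clique C, the k new k-cliques are at distance 1 from each other and at distance d(C, -) + 1
   from the old ones. Subtracting the row and column of C decouples them; then k - 1 of them
   reduce to -1 on the diagonal, and the last one becomes a pivot: a row with entries 1 on the
   old cliques, a column with entries k, and diagonal entry -(k + 1). After the n - k
   attachments a single clique c of the initial complete graph is left, beside n - k pivots and
   (k - 1)(n - k) diagonal entries -1; a few more operations and a signed permutation then
   produce the diagonal form of the theorem. *)

section \<open>Equivalence of matrices\<close>

lemma invertible_matI:
  fixes P :: "'a::semiring_1 mat"
  assumes "P \<in> carrier_mat n n" "P * P' = 1\<^sub>m n" "P' * P = 1\<^sub>m n"
  shows "invertible_mat P"
proof -
  have "dim_row P' = n" using arg_cong[OF assms(3), of dim_row] by simp
  then show ?thesis using assms unfolding invertible_mat_def inverts_mat_def by auto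
qed

lemma invertible_matE:
  fixes P :: "'a::semiring_1 mat"
  assumes "P \<in> carrier_mat n n" "invertible_mat P"
  obtains P' where "P' \<in> carrier_mat n n" "P * P' = 1\<^sub>m n" "P' * P = 1\<^sub>m n"
proof -
  obtain P' where PP': "P * P' = 1\<^sub>m n" and P'P: "P' * P = 1\<^sub>m (dim_row P')"
    using assms unfolding invertible_mat_def inverts_mat_def by auto
  have "dim_col P' = n" using arg_cong[OF PP', of dim_col] by simp
  moreover have "dim_row P' = n" using arg_cong[OF P'P, of dim_col] assms(1) by simp
  ultimately show thesis using that PP' P'P by auto
qed

lemma invertible_mat_one: "invertible_mat (1\<^sub>m n :: 'a::semiring_1 mat)"
  by (rule invertible_matI[of _ n "1\<^sub>m n"]) auto

lemma invertible_mat_mult: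
  fixes P Q :: "'a::semiring_1 mat"
  assumes P: "P \<in> carrier_mat n n" "invertible_mat P" and Q: "Q \<in> carrier_mat n n" "invertible_mat Q"
  shows "invertible_mat (P * Q)"
proof -
  obtain P' where P': "P' \<in> carrier_mat n n" "P * P' = 1\<^sub>m n" "P' * P = 1\<^sub>m n"
    using P by (rule invertible_matE)
  obtain Q' where Q': "Q' \<in> carrier_mat n n" "Q * Q' = 1\<^sub>m n" "Q' * Q = 1\<^sub>m n"
    using Q by (rule invertible_matE)
  have "P * Q * (Q' * P') = P * ((Q * Q') * P')"
    by (simp only: assoc_mult_mat[OF P(1) Q(1) mult_carrier_mat[OF Q'(1) P'(1)]]
        assoc_mult_mat[OF Q(1) Q'(1) P'(1)])
  also have "\<dots> = 1\<^sub>m n"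
    using P' Q' by (simp add: carrier_matD)
  finally have right: "P * Q * (Q' * P') = 1\<^sub>m n" .
  have "Q' * P' * (P * Q) = Q' * ((P' * P) * Q)"
    by (simp only: assoc_mult_mat[OF Q'(1) P'(1) mult_carrier_mat[OF P(1) Q(1)]]
        assoc_mult_mat[OF P'(1) P(1) Q(1)])
  also have "\<dots> = 1\<^sub>m n"
    using Q P' Q' by (simp add: carrier_matD)
  finally show ?thesis
    by (rule invertible_matI[OF mult_carrier_mat[OF P(1) Q(1)] right])
qed

lemma invertible_mat_transpose:
  fixes P :: "'a::comm_semiring_1 mat"
  assumes "P \<in> carrier_mat n n" "invertible_mat P"
  shows "invertible_mat (transpose_mat P)"
proof -
  obtain P' where P': "P' \<in> carrier_mat n n" "P * P' = 1\<^sub>m n" "P' * P = 1\<^sub>m n"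
    using assms by (rule invertible_matE)
  have "transpose_mat P * transpose_mat P' = 1\<^sub>m n"
    using transpose_mult[OF P'(1) assms(1)] P'(3) by simp
  moreover have "transpose_mat P' * transpose_mat P = 1\<^sub>m n"
    using transpose_mult[OF assms(1) P'(1)] P'(2) by simp
  ultimately show ?thesis
    using assms(1) by (intro invertible_matI[of _ n "transpose_mat P'"]) simp_all
qed

definition mat_equiv :: "'a::comm_ring_1 mat \<Rightarrow> 'a mat \<Rightarrow> bool" where
  "mat_equiv M S \<longleftrightarrow>
     (\<exists>P Q. P \<in> carrier_mat (dim_row M) (dim_row M) \<and> Q \<in> carrier_mat (dim_col M) (dim_col M) \<and>
        invertible_mat P \<and> invertible_mat Q \<and>
        S \<in> carrier_mat (dim_row M) (dim_col M) \<and> M = P * S * Q)"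

lemma mat_equivI:
  assumes "M \<in> carrier_mat n m" "P \<in> carrier_mat n n" "Q \<in> carrier_mat m m"
    "invertible_mat P" "invertible_mat Q" "S \<in> carrier_mat n m" "M = P * S * Q"
  shows "mat_equiv M S"
proof -
  have dims: "dim_row M = n" "dim_col M = m" using assms(1) by auto
  show ?thesis
    unfolding mat_equiv_def dims by (intro exI[of _ P] exI[of _ Q] conjI) (rule assms)+
qed

lemma mat_equivE:
  assumes "mat_equiv M S" "M \<in> carrier_mat n m"
  obtains P Q where "P \<in> carrier_mat n n" "Q \<in> carrier_mat m m"
    "invertible_mat P" "invertible_mat Q" "S \<in> carrier_mat n m" "M = P * S * Q"
proof -
  have dims: "dim_row M = n" "dim_col M = m" using assms(2) by auto
  obtain P Q where "P \<in> carrier_mat (dim_row M) (dim_row M)" "Q \<in> carrier_mat (dim_col M) (dim_col M)"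
    "invertible_mat P" "invertible_mat Q" "S \<in> carrier_mat (dim_row M) (dim_col M)" "M = P * S * Q"
    using assms(1) unfolding mat_equiv_def by (elim exE conjE)
  then show thesis unfolding dims by (rule that)
qed

lemma mat_equiv_trans [trans]:
  assumes "mat_equiv M S" "mat_equiv S T"
  shows "mat_equiv M T"
proof -
  obtain n m where M: "M \<in> carrier_mat n m" using carrier_matI[OF refl refl] by blast
  obtain P Q where PQ: "P \<in> carrier_mat n n" "Q \<in> carrier_mat m m"
    "invertible_mat P" "invertible_mat Q" "S \<in> carrier_mat n m" "M = P * S * Q"
    using assms(1) M by (rule mat_equivE)
  obtain P' Q' where PQ': "P' \<in> carrier_mat n n" "Q' \<in> carrier_mat m m"
    "invertible_mat P'" "invertible_mat Q'" "T \<in> carrier_mat n m" "S = P' * T * Q'"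
    using assms(2) PQ(5) by (rule mat_equivE)
  have PT: "P' * T \<in> carrier_mat n m" and PTQ: "P' * T * Q' \<in> carrier_mat n m"
    using PQ' by auto
  have "P * (P' * T * Q') * Q = P * ((P' * T * Q') * Q)"
    by (rule assoc_mult_mat[OF PQ(1) PTQ PQ(2)])
  also have "\<dots> = P * ((P' * T) * (Q' * Q))"
    by (simp only: assoc_mult_mat[OF PT PQ'(2) PQ(2)])
  also have "\<dots> = (P * (P' * T)) * (Q' * Q)"
    by (rule assoc_mult_mat[OF PQ(1) PT mult_carrier_mat[OF PQ'(2) PQ(2)], symmetric])
  also have "\<dots> = (P * P') * T * (Q' * Q)"
    by (simp only: assoc_mult_mat[OF PQ(1) PQ'(1) PQ'(5)])
  finally have "P * (P' * T * Q') * Q = (P * P') * T * (Q' * Q)" .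
  then have "M = (P * P') * T * (Q' * Q)"
    unfolding PQ(6) PQ'(6) .
  then show ?thesis
    by (rule mat_equivI[OF M mult_carrier_mat[OF PQ(1) PQ'(1)] mult_carrier_mat[OF PQ'(2) PQ(2)]
          invertible_mat_mult[OF PQ(1,3) PQ'(1,3)] invertible_mat_mult[OF PQ'(2,4) PQ(2,4)] PQ'(5)])
qed

lemma mat_equiv_refl: "mat_equiv (A :: 'a::comm_ring_1 mat) A"
proof -
  obtain n m where A: "A \<in> carrier_mat n m" using carrier_matI[OF refl refl] by blast
  show ?thesis
    using A invertible_mat_one by (intro mat_equivI[of A n m "1\<^sub>m n" "1\<^sub>m m"]) auto
qed

lemma mat_equiv_mult_left:
  fixes A :: "'a::comm_ring_1 mat"
  assumes P: "P \<in> carrier_mat n n" "invertible_mat P" and A: "A \<in> carrier_mat n m"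
  shows "mat_equiv A (P * A)"
proof -
  obtain P' where P': "P' \<in> carrier_mat n n" "P * P' = 1\<^sub>m n" "P' * P = 1\<^sub>m n"
    using P by (rule invertible_matE)
  have "P' * (P * A) * 1\<^sub>m m = (P' * P) * A"
    using P(1) A P'(1) by (simp add: carrier_matD)
  also have "\<dots> = A"
    using A P'(3) by (simp add: carrier_matD)
  finally have A_eq: "A = P' * (P * A) * 1\<^sub>m m" ..
  have "invertible_mat P'"
    using P P' by (intro invertible_matI[of P' n P]) auto
  then show ?thesis
    by (rule mat_equivI[OF A P'(1) one_carrier_mat _ invertible_mat_one mult_carrier_mat[OF P(1) A] A_eq])
qed

lemma mat_equiv_transpose:
  assumes "mat_equiv M S"
  shows "mat_equiv (transpose_mat M) (transpose_mat S)"
proof -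
  obtain n m where M: "M \<in> carrier_mat n m" using carrier_matI[OF refl refl] by blast
  obtain P Q where PQ: "P \<in> carrier_mat n n" "Q \<in> carrier_mat m m"
    "invertible_mat P" "invertible_mat Q" "S \<in> carrier_mat n m" "M = P * S * Q"
    using assms M by (rule mat_equivE)
  have "transpose_mat (P * S * Q) = transpose_mat Q * transpose_mat (P * S)"
    by (rule transpose_mult) (use PQ in auto)
  also have "transpose_mat (P * S) = transpose_mat S * transpose_mat P"
    by (rule transpose_mult) (use PQ in auto)
  finally have "transpose_mat M = transpose_mat Q * transpose_mat S * transpose_mat P"
    using PQ by simp
  moreover have "transpose_mat M \<in> carrier_mat m n" "transpose_mat S \<in> carrier_mat m n"
    "transpose_mat Q \<in> carrier_mat m m" "transpose_mat P \<in> carrier_mat n n"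
    using M PQ by auto
  ultimately show ?thesis
    using invertible_mat_transpose[OF PQ(2,4)] invertible_mat_transpose[OF PQ(1,3)]
    by (intro mat_equivI[of _ m n "transpose_mat Q" "transpose_mat P"])
qed

section \<open>Matrices indexed by lists\<close>

definition mat_of_fun :: "'b list \<Rightarrow> 'c list \<Rightarrow> ('b \<Rightarrow> 'c \<Rightarrow> 'a) \<Rightarrow> 'a mat" where
  "mat_of_fun rs cs f = mat (length rs) (length cs) (\<lambda>(i, j). f (rs ! i) (cs ! j))"

lemma mat_of_fun_carrier [simp]: "mat_of_fun rs cs f \<in> carrier_mat (length rs) (length cs)"
  by (simp add: mat_of_fun_def)

lemma index_mat_of_fun [simp]:
  "i < length rs \<Longrightarrow> j < length cs \<Longrightarrow> mat_of_fun rs cs f $$ (i, j) = f (rs ! i) (cs ! j)"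
  "dim_row (mat_of_fun rs cs f) = length rs" "dim_col (mat_of_fun rs cs f) = length cs"
  by (simp_all add: mat_of_fun_def)

lemma mat_of_fun_cong:
  assumes "\<And>x y. x \<in> set rs \<Longrightarrow> y \<in> set cs \<Longrightarrow> f x y = g x y"
  shows "mat_of_fun rs cs f = mat_of_fun rs cs g"
  using assms by (intro eq_matI) auto

lemma transpose_mat_of_fun: "transpose_mat (mat_of_fun rs cs f) = mat_of_fun cs rs (\<lambda>y x. f x y)"
  by (intro eq_matI) auto

lemma mat_of_fun_mult:
  fixes f :: "'b \<Rightarrow> 'd \<Rightarrow> 'a::comm_semiring_0"
  assumes "distinct ms"
  shows "mat_of_fun rs ms f * mat_of_fun ms cs g = mat_of_fun rs cs (\<lambda>x y. \<Sum>z\<in>set ms. f x z * g z y)"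
proof (rule eq_matI)
  fix i j assume "i < dim_row (mat_of_fun rs cs (\<lambda>x y. \<Sum>z\<in>set ms. f x z * g z y))"
    "j < dim_col (mat_of_fun rs cs (\<lambda>x y. \<Sum>z\<in>set ms. f x z * g z y))"
  then have ij: "i < length rs" "j < length cs" by simp_all
  have "(mat_of_fun rs ms f * mat_of_fun ms cs g) $$ (i, j) = (\<Sum>l<length ms. f (rs ! i) (ms ! l) * g (ms ! l) (cs ! j))"
    using ij by (simp add: scalar_prod_def atLeast0LessThan)
  also have "\<dots> = (\<Sum>z\<in>set ms. f (rs ! i) z * g z (cs ! j))"
    using sum.reindex_bij_betw[OF bij_betw_nth[OF assms refl refl]] .
  finally show "(mat_of_fun rs ms f * mat_of_fun ms cs g) $$ (i, j) =
      mat_of_fun rs cs (\<lambda>x y. \<Sum>z\<in>set ms. f x z * g z y) $$ (i, j)"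
    using ij by simp
qed simp_all

lemma mat_of_fun_delta:
  assumes "distinct rs"
  shows "mat_of_fun rs rs (\<lambda>x y. if x = y then 1 else 0) = 1\<^sub>m (length rs)"
  using assms by (intro eq_matI) (auto simp: nth_eq_iff_index_eq)

lemma invertible_mat_of_fun:
  fixes f g :: "'b \<Rightarrow> 'b \<Rightarrow> 'a::comm_semiring_1"
  assumes rs: "distinct rs" "distinct rs'" "set rs' = set rs"
    and fg: "\<And>x y. x \<in> set rs \<Longrightarrow> y \<in> set rs \<Longrightarrow>
               (\<Sum>z\<in>set rs. f x z * g z y) = (if x = y then 1 else 0)"
    and gf: "\<And>x y. x \<in> set rs \<Longrightarrow> y \<in> set rs \<Longrightarrow>
               (\<Sum>z\<in>set rs. g x z * f z y) = (if x = y then 1 else 0)"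
  shows "invertible_mat (mat_of_fun rs' rs f)"
proof (rule invertible_matI)
  have len: "length rs' = length rs"
    using rs by (metis distinct_card)
  show "mat_of_fun rs' rs f \<in> carrier_mat (length rs) (length rs)"
    using len mat_of_fun_carrier[of rs' rs f] by simp
  have "mat_of_fun rs' rs f * mat_of_fun rs rs' g = mat_of_fun rs' rs' (\<lambda>x y. \<Sum>z\<in>set rs. f x z * g z y)"
    by (rule mat_of_fun_mult[OF rs(1)])
  also have "\<dots> = mat_of_fun rs' rs' (\<lambda>x y. if x = y then 1 else 0)"
    by (rule mat_of_fun_cong) (use fg rs(3) in auto)
  finally show "mat_of_fun rs' rs f * mat_of_fun rs rs' g = 1\<^sub>m (length rs)"
    using mat_of_fun_delta[OF rs(2)] len by simp
  have "mat_of_fun rs rs' g * mat_of_fun rs' rs f = mat_of_fun rs rs (\<lambda>x y. \<Sum>z\<in>set rs'. g x z * f z y)"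
    by (rule mat_of_fun_mult[OF rs(2)])
  also have "\<dots> = mat_of_fun rs rs (\<lambda>x y. if x = y then 1 else 0)"
    by (rule mat_of_fun_cong) (use gf rs(3) in auto)
  finally show "mat_of_fun rs rs' g * mat_of_fun rs' rs f = 1\<^sub>m (length rs)"
    using mat_of_fun_delta[OF rs(1)] by simp
qed

lemma mat_equiv_add_rows:
  fixes f g :: "'b \<Rightarrow> 'c \<Rightarrow> 'a::comm_ring_1"
  assumes rs: "distinct rs" and Z: "Z \<subseteq> set rs" and XZ: "X \<inter> Z = {}"
    and g: "\<And>x y. x \<in> set rs \<Longrightarrow> y \<in> set cs \<Longrightarrow>
              g x y = f x y + (if x \<in> X then (\<Sum>z\<in>Z. a x z * f z y) else 0)"
  shows "mat_equiv (mat_of_fun rs cs f) (mat_of_fun rs cs g)"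
proof -
  \<comment> \<open>\<open>E 1\<close> is the identity plus a matrix supported on \<open>X \<times> Z\<close>, whose square vanishes as
    \<open>X \<inter> Z = {}\<close>; hence \<open>E (- 1)\<close> is its inverse.\<close>
  define E where "E t x z = (if x = z then 1 else 0) + (if x \<in> X \<and> z \<in> Z then t * a x z else 0)"
    for t :: 'a and x z
  have finZ: "finite Z" using Z finite_subset by blast
  have E_sum: "(\<Sum>z\<in>set rs. E t x z * h z) = h x + (if x \<in> X then t * (\<Sum>z\<in>Z. a x z * h z) else 0)"
    if x: "x \<in> set rs" for t x and h :: "'b \<Rightarrow> 'a"
  proof -
    have "(\<Sum>z\<in>set rs. E t x z * h z)
        = (\<Sum>z\<in>set rs. if x = z then h z else 0)
          + (\<Sum>z\<in>set rs. if z \<in> Z then (if x \<in> X then t * (a x z * h z) else 0) else 0)"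
      unfolding sum.distrib[symmetric] by (rule sum.cong) (use XZ in \<open>auto simp: E_def\<close>)
    also have "\<dots> = h x + (\<Sum>z\<in>Z. if x \<in> X then t * (a x z * h z) else 0)"
      using x Z by (simp add: sum.inter_restrict[symmetric] Int_absorb1)
    finally show ?thesis
      by (simp add: sum_distrib_left)
  qed
  have E_inverse: "(\<Sum>z\<in>set rs. E t x z * E (- t) z y) = (if x = y then 1 else 0)"
    if "x \<in> set rs" "y \<in> set rs" for t x y
  proof -
    have "(\<Sum>z\<in>Z. a x z * E (- t) z y) = (\<Sum>z\<in>Z. if y = z then a x y else 0)"
      by (rule sum.cong) (use XZ in \<open>auto simp: E_def\<close>)
    then have "(\<Sum>z\<in>Z. a x z * E (- t) z y) = (if y \<in> Z then a x y else 0)"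
      using finZ by simp
    then show ?thesis
      using E_sum[OF that(1), of t "\<lambda>z. E (- t) z y"] by (auto simp: E_def)
  qed
  let ?P = "mat_of_fun rs rs (E 1)"
  have "invertible_mat ?P"
    using E_inverse[of _ _ 1] E_inverse[of _ _ "- 1"]
    by (intro invertible_mat_of_fun[OF rs rs refl, of "E 1" "E (- 1)"]) auto
  then have "mat_equiv (mat_of_fun rs cs f) (?P * mat_of_fun rs cs f)"
    by (intro mat_equiv_mult_left) auto
  also have "?P * mat_of_fun rs cs f = mat_of_fun rs cs g"
    unfolding mat_of_fun_mult[OF rs] by (rule mat_of_fun_cong) (simp add: E_sum g)
  finally show ?thesis .
qed

lemma mat_equiv_add_cols:
  fixes f g :: "'b \<Rightarrow> 'c \<Rightarrow> 'a::comm_ring_1"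
  assumes cs: "distinct cs" and Z: "Z \<subseteq> set cs" and YZ: "Y \<inter> Z = {}"
    and g: "\<And>x y. x \<in> set rs \<Longrightarrow> y \<in> set cs \<Longrightarrow>
              g x y = f x y + (if y \<in> Y then (\<Sum>z\<in>Z. f x z * a y z) else 0)"
  shows "mat_equiv (mat_of_fun rs cs f) (mat_of_fun rs cs g)"
proof -
  have "mat_equiv (mat_of_fun cs rs (\<lambda>y x. f x y)) (mat_of_fun cs rs (\<lambda>y x. g x y))"
    by (rule mat_equiv_add_rows[OF cs Z YZ, where a = a]) (simp add: g mult.commute)
  from mat_equiv_transpose[OF this] show ?thesis
    by (simp add: transpose_mat_of_fun)
qed

lemma mat_equiv_reorder_rows:
  fixes f :: "'b \<Rightarrow> 'c \<Rightarrow> 'a::comm_ring_1"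
  assumes rs: "distinct rs" "distinct rs'" "set rs' = set rs"
    and s: "\<And>x. x \<in> set rs \<Longrightarrow> s x * s x = 1"
  shows "mat_equiv (mat_of_fun rs cs f) (mat_of_fun rs' cs (\<lambda>x y. s x * f x y))"
proof -
  define D where "D x z = (if x = z then s x else 0)" for x z
  have D_sum: "(\<Sum>z\<in>set rs. D x z * h z) = s x * h x" if "x \<in> set rs" for x and h :: "'b \<Rightarrow> 'a"
  proof -
    have "(\<Sum>z\<in>set rs. D x z * h z) = (\<Sum>z\<in>set rs. if x = z then s x * h z else 0)"
      by (rule sum.cong) (auto simp: D_def)
    then show ?thesis using that by simp
  qed
  have DD: "(\<Sum>z\<in>set rs. D x z * D z y) = (if x = y then 1 else 0)" if "x \<in> set rs" "y \<in> set rs" for x y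
    using D_sum[OF that(1), of "\<lambda>z. D z y"] s[OF that(1)] by (auto simp: D_def)
  have "invertible_mat (mat_of_fun rs' rs D)"
    by (rule invertible_mat_of_fun[OF rs DD DD])
  moreover have "length rs' = length rs"
    using rs by (metis distinct_card)
  ultimately have "mat_equiv (mat_of_fun rs cs f) (mat_of_fun rs' rs D * mat_of_fun rs cs f)"
    by (intro mat_equiv_mult_left) auto
  also have "mat_of_fun rs' rs D * mat_of_fun rs cs f = mat_of_fun rs' cs (\<lambda>x y. s x * f x y)"
    unfolding mat_of_fun_mult[OF rs(1)] by (rule mat_of_fun_cong) (use rs(3) in \<open>simp add: D_sum\<close>)
  finally show ?thesis .
qed

lemma mat_equiv_reorder_cols:
  fixes f :: "'b \<Rightarrow> 'c \<Rightarrow> 'a::comm_ring_1"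
  assumes "distinct cs" "distinct cs'" "set cs' = set cs"
  shows "mat_equiv (mat_of_fun rs cs f) (mat_of_fun rs cs' f)"
proof -
  have "mat_equiv (mat_of_fun cs rs (\<lambda>y x. f x y)) (mat_of_fun cs' rs (\<lambda>y x. 1 * f x y))"
    by (rule mat_equiv_reorder_rows) (use assms in auto)
  from mat_equiv_transpose[OF this] show ?thesis
    by (simp add: transpose_mat_of_fun)
qed

lemma mat_of_fun_map_cols: "mat_of_fun rs (map \<sigma> cs) f = mat_of_fun rs cs (\<lambda>x y. f x (\<sigma> y))"
  by (intro eq_matI) auto

lemma mat_equiv_monomial_diagonal:
  fixes w s :: "'b \<Rightarrow> 'a::comm_ring_1"
  assumes cs: "distinct cs" "distinct ls" "set ls = set cs"
    and \<sigma>: "bij_betw \<sigma> (set cs) (set cs)" and s: "\<And>x. x \<in> set cs \<Longrightarrow> s x * s x = 1"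
  shows "mat_equiv (mat_of_fun cs cs (\<lambda>x y. if y = \<sigma> x then w x else 0))
                   (mat_of_fun ls ls (\<lambda>x y. if x = y then s x * w x else 0))"
proof -
  have inj: "inj_on \<sigma> (set cs)" and onto: "\<sigma> ` set cs = set cs"
    using \<sigma> by (auto simp: bij_betw_def)
  have ms: "distinct (map \<sigma> ls)" "set (map \<sigma> ls) = set cs"
    using cs inj onto by (auto simp: distinct_map)
  have "mat_equiv (mat_of_fun cs cs (\<lambda>x y. if y = \<sigma> x then w x else 0))
      (mat_of_fun cs (map \<sigma> ls) (\<lambda>x y. if y = \<sigma> x then w x else 0))"
    by (rule mat_equiv_reorder_cols[OF cs(1) ms])
  also have "\<dots> = mat_of_fun cs ls (\<lambda>x y. if x = y then w x else 0)"
    unfolding mat_of_fun_map_cols using cs(3) inj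
    by (intro mat_of_fun_cong) (auto dest: inj_onD)
  also have "mat_equiv \<dots> (mat_of_fun ls ls (\<lambda>x y. s x * (if x = y then w x else 0)))"
    by (rule mat_equiv_reorder_rows[OF cs s])
  also have "\<dots> = mat_of_fun ls ls (\<lambda>x y. if x = y then s x * w x else 0)"
    by (intro mat_of_fun_cong) simp
  finally show ?thesis .
qed

lemma mat_of_fun_diagonal_eq_diag3:
  assumes "distinct (xs @ ys @ [z])"
    and "\<And>x. x \<in> set xs \<Longrightarrow> v x = 1" "\<And>y. y \<in> set ys \<Longrightarrow> v y = c" "v z = d"
  shows "mat_of_fun (xs @ ys @ [z]) (xs @ ys @ [z]) (\<lambda>x y. if x = y then v x else 0)
       = diag3 (length xs) (length ys) c d"
proof (rule eq_matI)
  let ?ls = "xs @ ys @ [z]"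
  fix i j assume "i < dim_row (diag3 (length xs) (length ys) c d)" "j < dim_col (diag3 (length xs) (length ys) c d)"
  then have ij: "i < length ?ls" "j < length ?ls" by (simp_all add: diag3_def)
  have "v (?ls ! i) = (if i < length xs then 1 else if i < length xs + length ys then c else d)"
    using ij assms(2-4) by (auto simp: nth_append)
  moreover have "?ls ! i = ?ls ! j \<longleftrightarrow> i = j"
    using ij assms(1) nth_eq_iff_index_eq by blast
  ultimately show "mat_of_fun ?ls ?ls (\<lambda>x y. if x = y then v x else 0) $$ (i, j)
      = diag3 (length xs) (length ys) c d $$ (i, j)"
    using ij by (cases "i = j") (simp_all add: diag3_def)
qed (simp_all add: diag3_def)

section \<open>Elimination in the k-distance matrix\<close>

text \<open>Rows and columns are indexed by the k-cliques of the final k-tree. \<open>A\<close> holds the k-cliques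
  of the current sub-k-tree, with their distance matrix \<open>d\<close>; each clique in \<open>B\<close> has become a pivot
  (entries 1 towards \<open>A\<close>, k from \<open>A\<close>, and \<open>-(k + 1)\<close> on the diagonal); all other cliques are
  already reduced to -1 on the diagonal.\<close>

definition elim_form :: "nat \<Rightarrow> 'b set \<Rightarrow> 'b set \<Rightarrow> ('b \<Rightarrow> 'b \<Rightarrow> int) \<Rightarrow> 'b \<Rightarrow> 'b \<Rightarrow> int" where
  "elim_form k A B d x y =
     (if x \<in> A then (if y \<in> A then d x y else if y \<in> B then int k else 0)
      else if x \<in> B then (if y \<in> A then 1 else if y = x then - (int k + 1) else 0)
      else if y = x then -1 else 0)"

definition coupling :: "'b set \<Rightarrow> 'b set \<Rightarrow> 'b \<Rightarrow> 'b \<Rightarrow> int" where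
  "coupling A N x y =
     (if x \<in> A \<and> y \<in> N \<or> x \<in> N \<and> y \<in> A then 1 else if x \<in> N \<and> y \<in> N then -1 else 0)"

text \<open>The new cliques \<open>N\<close> are at distance 1 from each other and one step further than \<open>C\<close> from
  everything else, so subtracting the row and the column of \<open>C\<close> leaves only the coupling.\<close>

lemma elim_form_decouple:
  fixes d d' :: "'b \<Rightarrow> 'b \<Rightarrow> int"
  assumes cs: "distinct cs" and C: "C \<in> A" "A \<subseteq> set cs"
    and disj: "A \<inter> N = {}" "A \<inter> B = {}" "N \<inter> B = {}"
    and d_AA: "\<And>x y. x \<in> A \<Longrightarrow> y \<in> A \<Longrightarrow> d' x y = d x y"
    and d_NA: "\<And>x y. x \<in> N \<Longrightarrow> y \<in> A \<Longrightarrow> d' x y = d C y + 1"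
    and d_AN: "\<And>x y. x \<in> A \<Longrightarrow> y \<in> N \<Longrightarrow> d' x y = d x C + 1"
    and d_NN: "\<And>x y. x \<in> N \<Longrightarrow> y \<in> N \<Longrightarrow> d' x y = (if x = y then 0 else 1)"
    and d_CC: "d C C = 0"
  shows "mat_equiv (mat_of_fun cs cs (elim_form k (A \<union> N) B d'))
                   (mat_of_fun cs cs (\<lambda>x y. elim_form k A B d x y + coupling A N x y))"
proof -
  define g where "g x y = (if x \<in> N then (if y \<in> A then 1 else if y = x then -1 else 0)
    else elim_form k (A \<union> N) B d' x y)" for x y
  have "mat_equiv (mat_of_fun cs cs (elim_form k (A \<union> N) B d')) (mat_of_fun cs cs g)"
    by (rule mat_equiv_add_rows[OF cs, where Z = "{C}" and X = N and a = "\<lambda>_ _. -1"])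
      (use C disj d_AA d_NA d_AN d_NN d_CC in \<open>auto simp: g_def elim_form_def\<close>)
  also have "mat_equiv \<dots> (mat_of_fun cs cs (\<lambda>x y. elim_form k A B d x y + coupling A N x y))"
    by (rule mat_equiv_add_cols[OF cs, where Z = "{C}" and Y = N and a = "\<lambda>_ _. -1"])
      (use C disj d_AA d_AN in \<open>auto simp: g_def elim_form_def coupling_def\<close>)
  finally show ?thesis .
qed

lemma elim_form_absorb_coupling:
  assumes cs: "distinct cs" and N: "N \<subseteq> set cs" "t \<in> N" "card N = k"
    and disj: "A \<inter> N = {}" "A \<inter> B = {}" "N \<inter> B = {}"
  shows "mat_equiv (mat_of_fun cs cs (\<lambda>x y. elim_form k A B d x y + coupling A N x y))
                   (mat_of_fun cs cs (elim_form k A (insert t B) d))"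
proof -
  define N' where "N' = N - {t}"
  have N': "finite N'" "card N' = k - 1" "N' \<subseteq> set cs" "t \<notin> N'" "N' \<subseteq> N"
    using N finite_subset unfolding N'_def by fastforce+
  have k_pos: "1 \<le> k"
    using N finite_subset by (metis List.finite_set One_nat_def card_gt_0_iff empty_iff less_eq_Suc_le)
  define g0 where "g0 x y = elim_form k A B d x y + coupling A N x y" for x y
  define g1 where "g1 x y = (if x \<in> N' then (if y = t then 1 else if y = x then -1 else 0) else g0 x y)"
    for x y
  define g2 where "g2 x y = elim_form k A (insert t B) d x y
    + (if y \<in> N' then (if x \<in> A then 1 else if x = t then -1 else 0) else 0)" for x y
  have t_AB: "t \<notin> A" "t \<notin> B" and N'_iff: "\<And>x. x \<in> N' \<longleftrightarrow> x \<in> N \<and> x \<noteq> t"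
    using N disj unfolding N'_def by auto
  have g0_N: "g0 x y = (if y \<in> A then 1 else if y \<in> N then (if y = x then -2 else -1) else 0)"
    if "x \<in> N" for x y
    using that disj by (auto simp: g0_def elim_form_def coupling_def)
  have row_sum: "(\<Sum>z\<in>N'. g1 x z) = (if x \<in> A then int k - 1 else if x = t then 1 - int k
      else if x \<in> N' then -1 else 0)" for x
  proof -
    have "(\<Sum>z\<in>N'. g1 x z) = (\<Sum>z\<in>N'. (if x \<in> A then 1 else if x = t then -1 else 0)
        - (if x = z then 1 else 0))"
      by (rule sum.cong)
        (use N disj t_AB in \<open>auto simp: g1_def g0_N N'_iff, auto simp: g0_def elim_form_def coupling_def\<close>)
    then show ?thesis
      using N' k_pos t_AB disj by (auto simp: sum_subtractf of_nat_diff)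
  qed
  have col_t: "g1 x t = (if x \<in> A then 1 else if x = t then -2 else if x \<in> N' then 1 else 0)" for x
    using N disj t_AB by (auto simp: g1_def g0_N N'_iff, auto simp: g0_def elim_form_def coupling_def)
  have col_other: "g1 x y = g2 x y" if "y \<noteq> t" for x y
  proof (cases "x \<in> N")
    case True
    then show ?thesis using that t_AB disj by (auto simp: g1_def g2_def g0_N N'_iff elim_form_def)
  next
    case False
    then show ?thesis using that N t_AB disj by (auto simp: g1_def g2_def g0_def N'_iff elim_form_def coupling_def)
  qed
  have col_sum: "(\<Sum>z\<in>N'. g2 z y) = (if y \<in> N' then -1 else 0)" for y
  proof -
    have "(\<Sum>z\<in>N'. g2 z y) = (\<Sum>z\<in>N'. if y = z then -1 else 0)"
      by (rule sum.cong) (use N' disj in \<open>auto simp: g2_def elim_form_def\<close>)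
    then show ?thesis using N' by simp
  qed
  have "mat_equiv (mat_of_fun cs cs g0) (mat_of_fun cs cs g1)"
    by (rule mat_equiv_add_rows[OF cs, where Z = "{t}" and X = N' and a = "\<lambda>_ _. -1"])
      (use N N' t_AB disj in \<open>auto simp: g1_def g0_N N'_iff\<close>)
  also have "mat_equiv \<dots> (mat_of_fun cs cs g2)"
    by (rule mat_equiv_add_cols[OF cs N'(3), where Y = "{t}" and a = "\<lambda>_ _. 1"])
      (use N' t_AB in \<open>auto simp: row_sum col_t col_other, auto simp: g2_def elim_form_def\<close>)
  also have "mat_equiv \<dots> (mat_of_fun cs cs (elim_form k A (insert t B) d))"
    by (rule mat_equiv_add_rows[OF cs N'(3), where X = "insert t A"
          and a = "\<lambda>x _. if x \<in> A then 1 else -1"])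
      (use N N' disj in \<open>simp_all add: sum_distrib_left[symmetric] col_sum, auto simp: g2_def\<close>)
  finally show ?thesis unfolding g0_def .
qed

lemma elim_form_extension_equiv:
  fixes d d' :: "'b \<Rightarrow> 'b \<Rightarrow> int"
  assumes cs: "distinct cs" and C: "C \<in> A" "A \<subseteq> set cs" and N: "N \<subseteq> set cs" "t \<in> N" "card N = k"
    and disj: "A \<inter> N = {}" "A \<inter> B = {}" "N \<inter> B = {}"
    and d_AA: "\<And>x y. x \<in> A \<Longrightarrow> y \<in> A \<Longrightarrow> d' x y = d x y"
    and d_NA: "\<And>x y. x \<in> N \<Longrightarrow> y \<in> A \<Longrightarrow> d' x y = d C y + 1"
    and d_AN: "\<And>x y. x \<in> A \<Longrightarrow> y \<in> N \<Longrightarrow> d' x y = d x C + 1"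
    and d_NN: "\<And>x y. x \<in> N \<Longrightarrow> y \<in> N \<Longrightarrow> d' x y = (if x = y then 0 else 1)"
    and d_CC: "d C C = 0"
  shows "mat_equiv (mat_of_fun cs cs (elim_form k (A \<union> N) B d'))
                   (mat_of_fun cs cs (elim_form k A (insert t B) d))"
  using elim_form_decouple[OF cs C disj d_AA d_NA d_AN d_NN d_CC]
    elim_form_absorb_coupling[OF cs N disj]
  by (rule mat_equiv_trans)

definition cleared_form :: "nat \<Rightarrow> 'b \<Rightarrow> 'b \<Rightarrow> 'b set \<Rightarrow> 'b \<Rightarrow> 'b \<Rightarrow> int" where
  "cleared_form k c b B x y =
     (if x = c then (if y = b then int (card B) * int k else if y \<in> B then int k else 0)
      else if x = b then (if y = c then 1 else 0)
      else if y = x then (if x \<in> B then - (int k + 1) else -1) else 0)"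

lemma elim_form_clear_column:
  fixes d :: "'b \<Rightarrow> 'b \<Rightarrow> int"
  assumes cs: "distinct cs" and c: "c \<in> set cs" and B: "B \<subseteq> set cs" "c \<notin> B"
    and b: "b \<in> B" and d: "d c c = 0"
  shows "mat_equiv (mat_of_fun cs cs (elim_form k {c} B d)) (mat_of_fun cs cs (cleared_form k c b B))"
proof -
  define B' where "B' = B - {b}"
  have B': "finite B'" "card B' = card B - 1" "B' \<subseteq> set cs" "c \<notin> B'" "b \<notin> B'"
    "\<And>x. x \<in> B' \<longleftrightarrow> x \<in> B \<and> x \<noteq> b"
    using B b finite_subset[OF B(1)] unfolding B'_def by auto
  have bc: "b \<noteq> c" using b B by auto
  have card_pos: "1 \<le> card B"
    using b finite_subset[OF B(1)] by (auto simp: Suc_le_eq card_gt_0_iff)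
  define h where "h x y = (if x \<in> B' then (if y = b then int k + 1 else if y = x then - (int k + 1) else 0)
    else elim_form k {c} B d x y)" for x y
  have sum_B': "(\<Sum>z\<in>B'. h x z) = (if x = c then int (card B - 1) * int k else if x \<in> B' then - (int k + 1) else 0)"
    for x
  proof -
    have "(\<Sum>z\<in>B'. h x z) = (\<Sum>z\<in>B'. (if x = c then int k else 0) + (if x = z then
        (if x \<in> B' then - (int k + 1) else 0) else 0))"
      by (rule sum.cong) (use B B'(6) in \<open>auto simp: h_def elim_form_def\<close>)
    then show ?thesis using B'(1,2,4,5) by (simp add: sum.distrib)
  qed
  have col_b: "h x b + (\<Sum>z\<in>insert c B'. h x z * (if z = c then int k + 1 else 1)) = cleared_form k c b B x b"
    for x
  proof -
    have "(\<Sum>z\<in>B'. h x z * (if z = c then int k + 1 else 1)) = (\<Sum>z\<in>B'. h x z)"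
      by (rule sum.cong) (use B'(4) in auto)
    then have split: "(\<Sum>z\<in>insert c B'. h x z * (if z = c then int k + 1 else 1))
        = h x c * (int k + 1) + (\<Sum>z\<in>B'. h x z)"
      using B'(1,4) by simp
    show ?thesis
    proof (cases "x = c")
      case True
      have "h c b = int k" "h c c = 0"
        using b bc B'(4) d by (simp_all add: h_def elim_form_def)
      moreover have "int k + int (card B - 1) * int k = int (card B) * int k"
        using card_pos by (simp add: of_nat_diff algebra_simps)
      ultimately show ?thesis
        using True split sum_B'[of c] by (simp add: cleared_form_def)
    next
      case False
      have "h x c = (if x = b then 1 else 0)" "cleared_form k c b B x b = 0"
        "h x b = (if x \<in> B' then int k + 1 else if x = b then - (int k + 1) else 0)"
        using False b bc B'(6) by (auto simp: h_def elim_form_def cleared_form_def)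
      then show ?thesis
        using split sum_B'[of x] False B'(5) by simp
    qed
  qed
  have "mat_equiv (mat_of_fun cs cs (elim_form k {c} B d)) (mat_of_fun cs cs h)"
    by (rule mat_equiv_add_rows[OF cs, where X = B' and Z = "{b}" and a = "\<lambda>_ _. -1"])
      (use B b B'(3,6) in \<open>auto simp: h_def elim_form_def\<close>)
  also have "mat_equiv \<dots> (mat_of_fun cs cs (cleared_form k c b B))"
    by (rule mat_equiv_add_cols[OF cs, where Y = "{b}" and Z = "insert c B'"
          and a = "\<lambda>_ z. if z = c then int k + 1 else 1"])
      (use c B b d B'(3,4,6) in \<open>auto simp: col_b, auto simp: h_def elim_form_def cleared_form_def\<close>)
  finally show ?thesis .
qed

lemma cleared_form_monomial_equiv:
  fixes k :: nat
  assumes cs: "distinct cs" and c: "c \<in> set cs" and B: "B \<subseteq> set cs" "c \<notin> B"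
    and b: "b1 \<in> B" "b2 \<in> B" "b1 \<noteq> b2"
  defines "\<sigma> \<equiv> \<lambda>x. if x = b1 then c else if x = c then b2 else if x = b2 then b1 else x"
    and "w \<equiv> \<lambda>x. if x = b1 then 1 else if x = c then -1
                  else if x = b2 then - ((int k + 1) * int (card B) * int k)
                  else if x \<in> B then - (int k + 1) else -1"
  shows "mat_equiv (mat_of_fun cs cs (cleared_form k c b1 B))
                   (mat_of_fun cs cs (\<lambda>x y. if y = \<sigma> x then w x else 0))"
proof -
  define r where "r = card B"
  define R where "R = B - {b1, b2}"
  have R: "finite R" "R \<subseteq> set cs" and R_iff: "\<And>x. x \<in> R \<longleftrightarrow> x \<in> B \<and> x \<noteq> b1 \<and> x \<noteq> b2"
    using B b finite_subset[OF B(1)] unfolding R_def by auto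
  have ne: "b1 \<noteq> c" "b2 \<noteq> c" "c \<notin> R" using b B R_iff by auto
  define g0 where "g0 = cleared_form k c b1 B"
  define g1 where "g1 x y = (if x = c then (if y = b1 then int r * int k else if y = b2 then -1
    else if y \<in> R then int k else 0) else g0 x y)" for x y
  define g2 where "g2 x y = (if x = b2 then (if y = b1 then - ((int k + 1) * int r * int k)
    else if y \<in> R then - ((int k + 1) * int k) else 0) else g1 x y)" for x y
  define g3 where "g3 x y = (if x = b2 then g2 b2 y else if y = \<sigma> x then w x else 0)" for x y
  have col_b2: "g2 x b2 = (if x = c then -1 else 0)" for x
    using ne b(3) R_iff by (simp add: g2_def g1_def g0_def cleared_form_def)
  have row_other: "g2 x y = (if y = \<sigma> x then w x else 0)" if "x \<noteq> c" "x \<noteq> b2" for x y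
    using that ne b(3) by (simp add: g2_def g1_def g0_def cleared_form_def \<sigma>_def w_def)
  have sum_R: "(\<Sum>z\<in>R. g3 z y) = (if y \<in> R then - (int k + 1) else 0)" for y
  proof -
    have "(\<Sum>z\<in>R. g3 z y) = (\<Sum>z\<in>R. if y = z then - (int k + 1) else 0)"
      by (rule sum.cong) (use ne R_iff B(2) in \<open>auto simp: g3_def \<sigma>_def w_def\<close>)
    then show ?thesis using R(1) by simp
  qed
  have sum_R': "(\<Sum>z\<in>R. - int k * g3 z y) = - int k * (if y \<in> R then - (int k + 1) else 0)" for y
    by (simp only: sum_distrib_left[symmetric] sum_R)
  have b_cs: "b1 \<in> set cs" "b2 \<in> set cs" using b B by auto
  have "mat_equiv (mat_of_fun cs cs g0) (mat_of_fun cs cs g1)"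
    by (rule mat_equiv_add_rows[OF cs, where X = "{c}" and Z = "{b2}" and a = "\<lambda>_ _. 1"])
      (use b b_cs ne R_iff in \<open>simp_all add: g1_def g0_def cleared_form_def r_def\<close>)
  also have "mat_equiv \<dots> (mat_of_fun cs cs g2)"
    by (rule mat_equiv_add_rows[OF cs, where X = "{b2}" and Z = "{c}" and a = "\<lambda>_ _. - (int k + 1)"])
      (use c b ne R_iff in \<open>simp_all add: g2_def g1_def g0_def cleared_form_def algebra_simps\<close>)
  also have "mat_equiv \<dots> (mat_of_fun cs cs g3)"
  proof (rule mat_equiv_add_cols[OF cs, where Y = "insert b1 R" and Z = "{b2}"
        and a = "\<lambda>y _. if y = b1 then int r * int k else int k"])
    show "{b2} \<subseteq> set cs" "insert b1 R \<inter> {b2} = {}"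
      using b b_cs R_iff by auto
    fix x y
    consider "x = c" | "x = b2" | "x \<noteq> c" "x \<noteq> b2" by blast
    then show "g3 x y = g2 x y
        + (if y \<in> insert b1 R then \<Sum>z\<in>{b2}. g2 x z * (if y = b1 then int r * int k else int k) else 0)"
    proof cases
      case 1
      have "g2 c y = (if y = b1 then int r * int k else if y = b2 then -1 else if y \<in> R then int k else 0)"
        using ne by (simp add: g2_def g1_def)
      then show ?thesis
        using 1 col_b2[of c] ne b(3) R_iff by (simp add: g3_def \<sigma>_def w_def)
    next
      case 2
      then show ?thesis
        using col_b2[of b2] ne by (simp add: g3_def)
    next
      case 3
      then show ?thesis
        using col_b2[of x] row_other[of x y] by (simp add: g3_def)
    qed
  qed
  also have "mat_equiv \<dots> (mat_of_fun cs cs (\<lambda>x y. if y = \<sigma> x then w x else 0))"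
    by (rule mat_equiv_add_rows[OF cs R(2), where X = "{b2}" and a = "\<lambda>_ _. - int k"])
      (use R_iff ne b in \<open>simp_all only: sum_R',
        simp_all add: g3_def g2_def \<sigma>_def w_def r_def algebra_simps\<close>)
  finally show ?thesis unfolding g0_def .
qed

lemma diag3_enumeration:
  assumes cs: "distinct cs" and c: "c \<in> set cs" and B: "B \<subseteq> set cs" "c \<notin> B"
    and b: "b1 \<in> B" "b2 \<in> B" "b1 \<noteq> b2"
  obtains us rs where "distinct ((b1 # c # us) @ rs @ [b2])" "set ((b1 # c # us) @ rs @ [b2]) = set cs"
    "set us = set cs - insert c B" "set rs = B - {b1, b2}"
    "length (b1 # c # us) = length cs - card B + 1" "length rs = card B - 2"
proof -
  have fin: "finite B" using B(1) finite_subset by blast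
  obtain us where us: "distinct us" "set us = set cs - insert c B"
    using finite_distinct_list[of "set cs - insert c B"] by auto
  obtain rs where rs: "distinct rs" "set rs = B - {b1, b2}"
    using finite_distinct_list[of "B - {b1, b2}"] fin by auto
  have card_cB: "card (insert c B) = card B + 1" and sub: "insert c B \<subseteq> set cs"
    using fin B c by auto
  have "length us = card (set cs - insert c B)"
    using distinct_card[OF us(1)] us(2) by simp
  also have "\<dots> = length cs - (card B + 1)"
    using fin sub card_cB distinct_card[OF cs] by (simp add: card_Diff_subset)
  finally have "length us = length cs - (card B + 1)" .
  moreover have "card B + 1 \<le> length cs"
    using card_cB sub distinct_card[OF cs] by (metis List.finite_set card_mono)
  ultimately have "length (b1 # c # us) = length cs - card B + 1"
    by simp
  moreover have "length rs = card B - 2"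
    using rs b fin distinct_card[OF rs(1)] by (simp add: card_Diff_subset)
  moreover have "distinct ((b1 # c # us) @ rs @ [b2])" "set ((b1 # c # us) @ rs @ [b2]) = set cs"
    using us rs B b c by auto
  ultimately show thesis
    using that us(2) rs(2) by blast
qed

lemma elim_form_pivot_equiv_diag3:
  fixes d :: "'b \<Rightarrow> 'b \<Rightarrow> int"
  assumes cs: "distinct cs" and c: "c \<in> set cs" and B: "B \<subseteq> set cs" "c \<notin> B" "2 \<le> card B"
    and d: "d c c = 0"
  shows "mat_equiv (mat_of_fun cs cs (elim_form k {c} B d))
           (diag3 (length cs - card B + 1) (card B - 2) (int k + 1) (int k * (int k + 1) * int (card B)))"
proof -
  have fin: "finite B" using B(1) finite_subset by blast
  have "\<not> card B \<le> Suc 0" using B(3) by simp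
  then obtain b1 b2 where b: "b1 \<in> B" "b2 \<in> B" "b1 \<noteq> b2"
    using card_le_Suc0_iff_eq[OF fin] by blast
  define \<sigma> where "\<sigma> = (\<lambda>x. if x = b1 then c else if x = c then b2 else if x = b2 then b1 else x)"
  define w where "w = (\<lambda>x. if x = b1 then 1 else if x = c then -1
    else if x = b2 then - ((int k + 1) * int (card B) * int k) else if x \<in> B then - (int k + 1) else -1)"
  define s where "s x = (if x = b1 then 1 else - 1 :: int)" for x
  obtain us rs where ls: "distinct ((b1 # c # us) @ rs @ [b2])" "set ((b1 # c # us) @ rs @ [b2]) = set cs"
    and us: "set us = set cs - insert c B" and rs: "set rs = B - {b1, b2}"
    and len: "length (b1 # c # us) = length cs - card B + 1" "length rs = card B - 2"
    using diag3_enumeration[OF cs c B(1,2) b] by blast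
  have bij: "bij_betw \<sigma> (set cs) (set cs)"
  proof (rule bij_betwI[where g = "\<lambda>x. if x = c then b1 else if x = b2 then c else if x = b1 then b2 else x"])
    show "\<sigma> \<in> set cs \<rightarrow> set cs" using b B c unfolding \<sigma>_def by auto
  qed (use b B c in \<open>auto simp: \<sigma>_def\<close>)
  have "mat_equiv (mat_of_fun cs cs (elim_form k {c} B d)) (mat_of_fun cs cs (cleared_form k c b1 B))"
    by (rule elim_form_clear_column[where d = d, OF cs c B(1,2) b(1) d])
  also have "mat_equiv \<dots> (mat_of_fun cs cs (\<lambda>x y. if y = \<sigma> x then w x else 0))"
    unfolding \<sigma>_def w_def by (rule cleared_form_monomial_equiv[OF cs c B(1,2) b])
  also have "mat_equiv \<dots> (mat_of_fun ((b1 # c # us) @ rs @ [b2]) ((b1 # c # us) @ rs @ [b2])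
      (\<lambda>x y. if x = y then s x * w x else 0))"
    by (rule mat_equiv_monomial_diagonal[OF cs ls bij]) (simp add: s_def)
  also have "\<dots> = diag3 (length (b1 # c # us)) (length rs) (int k + 1) (int k * (int k + 1) * int (card B))"
    by (rule mat_of_fun_diagonal_eq_diag3[OF ls(1)]) (use us rs b B in \<open>auto simp: s_def w_def\<close>)
  finally show ?thesis unfolding len .
qed

section \<open>Attaching a vertex to a k-tree\<close>

definition kconnected :: "nat \<Rightarrow> 'a set \<Rightarrow> 'a set set \<Rightarrow> bool" where
  "kconnected k V E \<longleftrightarrow> (\<forall>a\<in>cliques k V E. \<forall>b\<in>cliques k V E. (kstep k V E)\<^sup>*\<^sup>* a b)"

lemma kdist_le: "(kstep k V E ^^ m) a b \<Longrightarrow> kdist k V E a b \<le> m"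
  unfolding kdist_def by (rule Least_le)

lemma kdist_self [simp]: "kdist k V E a a = 0"
  unfolding kdist_def by (rule Least_equality) auto

text \<open>Without a walk, \<open>kdist\<close> would be the junk value of \<open>LEAST\<close> on an empty predicate.\<close>

lemma kconnected_walk:
  assumes "kconnected k V E" "a \<in> cliques k V E" "b \<in> cliques k V E"
  shows "(kstep k V E ^^ kdist k V E a b) a b"
proof -
  have "(kstep k V E)\<^sup>*\<^sup>* a b"
    using assms unfolding kconnected_def by blast
  then obtain m where "(kstep k V E ^^ m) a b"
    using rtranclp_imp_relpowp by metis
  then show ?thesis unfolding kdist_def by (rule LeastI)
qed

lemma kdist_step_le:
  assumes "kconnected k V E" "a \<in> cliques k V E" "kstep k V E u w"
  shows "kdist k V E a w \<le> kdist k V E a u + 1"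
proof -
  have u: "u \<in> cliques k V E" using assms(3) unfolding kstep_def by blast
  have "(kstep k V E ^^ Suc (kdist k V E a u)) a w"
    using kconnected_walk[OF assms(1,2) u] assms(3) by (rule relpowp_Suc_I)
  then show ?thesis using kdist_le by fastforce
qed

lemma relpowp_potential_bound:
  fixes f :: "'b \<Rightarrow> nat"
  assumes "\<And>u w. R u w \<Longrightarrow> f w \<le> f u + 1" and "(R ^^ m) a b"
  shows "f b \<le> f a + m"
  using assms(2)
proof (induction m arbitrary: b)
  case 0
  then show ?case by (auto elim: relpowp_0_E)
next
  case (Suc m)
  then obtain y where "(R ^^ m) a y" "R y b" by (blast elim: relpowp_Suc_E)
  then show ?case using Suc.IH assms(1)[of y b] by fastforce
qed

locale ktree_step =
  fixes k :: nat and V :: "'a set" and E :: "'a set set" and x :: 'a and C :: "'a set"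
  assumes finite_V: "finite V" and edges_V: "\<forall>e\<in>E. e \<subseteq> V" and x_new: "x \<notin> V"
    and C_V: "C \<subseteq> V" and card_C: "card C = k" and clique_C: "is_clique E C"
begin

abbreviation E' :: "'a set set" where "E' \<equiv> E \<union> {{x, c} | c. c \<in> C}"

definition new_cliques :: "'a set set" where
  "new_cliques = {S. x \<in> S \<and> S \<subseteq> insert x C \<and> card S = k}"

lemma finite_C: "finite C"
  using C_V finite_V by (rule finite_subset)

lemma x_notin_C: "x \<notin> C"
  using x_new C_V by auto

lemma old_clique_extend_iff:
  assumes "x \<notin> S"
  shows "S \<in> cliques m (insert x V) E' \<longleftrightarrow> S \<in> cliques m V E"
proof
  assume S: "S \<in> cliques m (insert x V) E'"
  have "is_clique E S"
    unfolding is_clique_def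
  proof (intro ballI impI)
    fix u v assume uv: "u \<in> S" "v \<in> S" "u \<noteq> v"
    then have "{u, v} \<in> E'" using S unfolding cliques_def is_clique_def by blast
    then show "{u, v} \<in> E" using assms uv by (auto simp: doubleton_eq_iff)
  qed
  then show "S \<in> cliques m V E" using S assms unfolding cliques_def by blast
qed (auto simp: cliques_def is_clique_def)

lemma new_clique_extend_iff:
  assumes "x \<in> S"
  shows "S \<in> cliques m (insert x V) E' \<longleftrightarrow> S \<subseteq> insert x C \<and> card S = m"
proof
  assume S: "S \<in> cliques m (insert x V) E'"
  have "u \<in> insert x C" if "u \<in> S" "u \<noteq> x" for u
  proof -
    have "{u, x} \<in> E'" using S that assms unfolding cliques_def is_clique_def by blast
    moreover have "{u, x} \<notin> E" using edges_V x_new by blast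
    ultimately obtain c where "c \<in> C" "{u, x} = {x, c}" by blast
    then show ?thesis using that by (metis doubleton_eq_iff insertI2)
  qed
  then show "S \<subseteq> insert x C \<and> card S = m" using S unfolding cliques_def by blast
next
  assume S: "S \<subseteq> insert x C \<and> card S = m"
  have "{u, v} \<in> E'" if uv: "u \<in> S" "v \<in> S" "u \<noteq> v" for u v
  proof -
    consider "u = x" "v \<in> C" | "v = x" "u \<in> C" | "u \<in> C" "v \<in> C" using S uv by auto
    then show ?thesis
    proof cases
      case 2
      then have "{u, v} = {x, u}" by auto
      then show ?thesis using 2 by blast
    next
      case 3
      then show ?thesis using clique_C uv unfolding is_clique_def by blast
    qed blast
  qed
  then show "S \<in> cliques m (insert x V) E'"
    using S C_V finite_C finite_subset[of S "insert x C"] unfolding cliques_def is_clique_def by auto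
qed

lemma cliques_extend:
  "cliques m (insert x V) E' = cliques m V E \<union> {S. x \<in> S \<and> S \<subseteq> insert x C \<and> card S = m}"
proof -
  have "S \<in> cliques m (insert x V) E' \<longleftrightarrow>
      S \<in> cliques m V E \<or> x \<in> S \<and> S \<subseteq> insert x C \<and> card S = m" for S
  proof (cases "x \<in> S")
    case True
    moreover have "S \<notin> cliques m V E" using True x_new unfolding cliques_def by auto
    ultimately show ?thesis using new_clique_extend_iff by blast
  qed (simp add: old_clique_extend_iff)
  then show ?thesis by blast
qed

lemma card_new_cliques:
  assumes "1 \<le> k"
  shows "card new_cliques = k"
proof -
  have "new_cliques = (\<lambda>c. insert x (C - {c})) ` C"
    unfolding new_cliques_def
  proof (intro equalityI subsetI)
    fix S assume S: "S \<in> {S. x \<in> S \<and> S \<subseteq> insert x C \<and> card S = k}"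
    then have fin: "finite S" using finite_C finite_subset by blast
    have sub: "S - {x} \<subseteq> C" using S by auto
    have "card (C - (S - {x})) = 1"
      using S fin card_C assms by (simp add: card_Diff_subset[OF _ sub])
    then obtain c where c: "C - (S - {x}) = {c}" by (rule card_1_singletonE)
    then have "c \<in> C" "S = insert x (C - {c})" using sub S by auto
    then show "S \<in> (\<lambda>c. insert x (C - {c})) ` C" by blast
  next
    fix S assume "S \<in> (\<lambda>c. insert x (C - {c})) ` C"
    then obtain c where "c \<in> C" "S = insert x (C - {c})" by blast
    then show "S \<in> {S. x \<in> S \<and> S \<subseteq> insert x C \<and> card S = k}"
      using finite_C x_notin_C card_C assms by auto
  qed
  moreover have "inj_on (\<lambda>c. insert x (C - {c})) C"
  proof (rule inj_onI)
    fix c c' assume cc: "c \<in> C" "c' \<in> C" "insert x (C - {c}) = insert x (C - {c'})"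
    then have "C - {c} = C - {c'}" using x_notin_C by (metis Diff_iff insert_ident)
    then show "c = c'" using cc by blast
  qed
  ultimately show ?thesis
    using card_C by (simp add: card_image)
qed

lemma cliques_Suc_extend: "cliques (k + 1) (insert x V) E' = cliques (k + 1) V E \<union> {insert x C}"
proof -
  have card_xC: "card (insert x C) = k + 1" using finite_C x_notin_C card_C by simp
  have "S = insert x C" if "S \<subseteq> insert x C" "card S = k + 1" for S
    using card_subset_eq[of "insert x C" S] finite_C that card_xC by simp
  then have "{S. x \<in> S \<and> S \<subseteq> insert x C \<and> card S = k + 1} = {insert x C}"
    using card_xC by auto
  then show ?thesis by (simp add: cliques_extend)
qed

lemma cliques_k_extend: "cliques k (insert x V) E' = cliques k V E \<union> new_cliques"
  by (simp add: cliques_extend new_cliques_def)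

lemma C_clique: "C \<in> cliques k V E"
  using C_V finite_C card_C clique_C unfolding cliques_def by auto

lemma cliques_disjoint: "cliques k V E \<inter> new_cliques = {}"
  using x_new unfolding cliques_def new_cliques_def by auto

lemma kstep_extend_cases:
  assumes "kstep k (insert x V) E' u w"
  shows "kstep k V E u w \<or> u \<in> insert C new_cliques \<and> w \<in> insert C new_cliques"
proof -
  obtain \<sigma> where \<sigma>: "u \<in> cliques k (insert x V) E'" "w \<in> cliques k (insert x V) E'"
    "\<sigma> \<in> cliques (k + 1) (insert x V) E'" "u \<subseteq> \<sigma>" "w \<subseteq> \<sigma>"
    using assms unfolding kstep_def by blast
  show ?thesis
  proof (cases "\<sigma> = insert x C")
    case False
    then have old: "\<sigma> \<in> cliques (k + 1) V E" using \<sigma>(3) cliques_Suc_extend by auto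
    then have "x \<notin> u" "x \<notin> w" using \<sigma> x_new unfolding cliques_def by auto
    then have "u \<in> cliques k V E" "w \<in> cliques k V E" using \<sigma>(1,2) cliques_extend by auto
    then show ?thesis using old \<sigma> unfolding kstep_def by blast
  next
    case True
    have "v \<in> insert C new_cliques" if "v \<in> cliques k (insert x V) E'" "v \<subseteq> insert x C" for v
    proof (cases "x \<in> v")
      case False
      then have "v \<subseteq> C" "card v = card C" using that card_C unfolding cliques_def by auto
      then show ?thesis using finite_C card_subset_eq by blast
    qed (use that in \<open>auto simp: cliques_def new_cliques_def\<close>)
    then show ?thesis using \<sigma> True by blast
  qed
qed

lemma kstep_extend_old: "kstep k V E u w \<Longrightarrow> kstep k (insert x V) E' u w"
  unfolding kstep_def cliques_extend by blast

lemma kstep_extend_new: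
  assumes "u \<in> insert C new_cliques" "w \<in> insert C new_cliques"
  shows "kstep k (insert x V) E' u w"
proof -
  have "u \<in> cliques k (insert x V) E'" "w \<in> cliques k (insert x V) E'"
    using assms C_clique cliques_k_extend by auto
  moreover have "u \<subseteq> insert x C" "w \<subseteq> insert x C" using assms by (auto simp: new_cliques_def)
  ultimately show ?thesis
    unfolding kstep_def using cliques_Suc_extend by blast
qed

text \<open>A new clique is adjacent exactly to \<open>C\<close> and to the other new cliques, and walks between
  old cliques never need the new vertex.\<close>

definition extended_dist :: "'a set \<Rightarrow> 'a set \<Rightarrow> nat" where
  "extended_dist a b =
     (if a \<in> new_cliques then (if b \<in> new_cliques then (if a = b then 0 else 1) else kdist k V E C b + 1)
      else if b \<in> new_cliques then kdist k V E a C + 1 else kdist k V E a b)"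

lemma extended_dist_walk:
  assumes conn: "kconnected k V E"
    and ab: "a \<in> cliques k (insert x V) E'" "b \<in> cliques k (insert x V) E'"
  shows "(kstep k (insert x V) E' ^^ extended_dist a b) a b"
proof -
  have old_walk: "(kstep k (insert x V) E' ^^ kdist k V E u v) u v"
    if "u \<in> cliques k V E" "v \<in> cliques k V E" for u v
    by (rule relpowp_mono[OF kstep_extend_old kconnected_walk[OF conn that]])
  have old: "a \<in> cliques k V E" if "a \<notin> new_cliques" and "a \<in> cliques k (insert x V) E'" for a
    using that cliques_k_extend by auto
  consider "a \<in> new_cliques" "b \<in> new_cliques" | "a \<in> new_cliques" "b \<notin> new_cliques"
    | "a \<notin> new_cliques" "b \<in> new_cliques" | "a \<notin> new_cliques" "b \<notin> new_cliques" by blast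
  then show ?thesis
  proof cases
    case 1
    then show ?thesis
      using kstep_extend_new[of a b] by (auto simp: extended_dist_def intro: relpowp_0_I)
  next
    case 2
    have "kstep k (insert x V) E' a C" using 2 by (intro kstep_extend_new) auto
    then have "(kstep k (insert x V) E' ^^ Suc (kdist k V E C b)) a b"
      by (rule relpowp_Suc_I2) (rule old_walk[OF C_clique old[OF 2(2) ab(2)]])
    moreover have "extended_dist a b = Suc (kdist k V E C b)"
      unfolding extended_dist_def using 2 by (simp only: if_P if_not_P if_False Suc_eq_plus1)
    ultimately show ?thesis by simp
  next
    case 3
    have "kstep k (insert x V) E' C b" using 3 by (intro kstep_extend_new) auto
    with old_walk[OF old[OF 3(1) ab(1)] C_clique]
    have "(kstep k (insert x V) E' ^^ Suc (kdist k V E a C)) a b"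
      by (rule relpowp_Suc_I)
    moreover have "extended_dist a b = Suc (kdist k V E a C)"
      unfolding extended_dist_def using 3 by (simp only: if_P if_not_P if_False Suc_eq_plus1)
    ultimately show ?thesis by simp
  next
    case 4
    then have "extended_dist a b = kdist k V E a b"
      unfolding extended_dist_def by (simp only: if_not_P if_False)
    then show ?thesis using old_walk[OF old[OF 4(1) ab(1)] old[OF 4(2) ab(2)]] by simp
  qed
qed

lemma extended_dist_step:
  assumes conn: "kconnected k V E" and a: "a \<in> cliques k (insert x V) E'"
    and uw: "kstep k (insert x V) E' u w"
  shows "extended_dist a w \<le> extended_dist a u + 1"
  using kstep_extend_cases[OF uw]
proof
  assume step: "kstep k V E u w"
  then have "u \<in> cliques k V E" "w \<in> cliques k V E" unfolding kstep_def by auto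
  then have "u \<notin> new_cliques" "w \<notin> new_cliques" using cliques_disjoint by auto
  moreover have "kdist k V E C w \<le> kdist k V E C u + 1"
    by (rule kdist_step_le[OF conn C_clique step])
  moreover have "kdist k V E a w \<le> kdist k V E a u + 1" if "a \<notin> new_cliques"
    using that a cliques_k_extend kdist_step_le[OF conn _ step] by auto
  ultimately show ?thesis by (auto simp: extended_dist_def)
next
  assume "u \<in> insert C new_cliques \<and> w \<in> insert C new_cliques"
  moreover have "C \<notin> new_cliques" using C_clique cliques_disjoint by auto
  ultimately show ?thesis by (auto simp: extended_dist_def)
qed

lemma kdist_extend:
  assumes conn: "kconnected k V E"
    and ab: "a \<in> cliques k (insert x V) E'" "b \<in> cliques k (insert x V) E'"
  shows "kdist k (insert x V) E' a b = extended_dist a b"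
proof (rule antisym)
  have walk: "(kstep k (insert x V) E' ^^ extended_dist a b) a b"
    by (rule extended_dist_walk[OF assms])
  then show "kdist k (insert x V) E' a b \<le> extended_dist a b"
    by (rule kdist_le)
  have "\<And>u w. kstep k (insert x V) E' u w \<Longrightarrow> extended_dist a w \<le> extended_dist a u + 1"
    by (rule extended_dist_step[OF conn ab(1)])
  moreover have "(kstep k (insert x V) E' ^^ kdist k (insert x V) E' a b) a b"
    using walk unfolding kdist_def by (rule LeastI)
  ultimately have "extended_dist a b \<le> extended_dist a a + kdist k (insert x V) E' a b"
    by (rule relpowp_potential_bound)
  moreover have "extended_dist a a = 0"
    by (simp add: extended_dist_def)
  ultimately show "extended_dist a b \<le> kdist k (insert x V) E' a b"
    by simp
qed

lemma kconnected_extend: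
  assumes "kconnected k V E"
  shows "kconnected k (insert x V) E'"
  unfolding kconnected_def
proof (intro ballI)
  fix a b assume "a \<in> cliques k (insert x V) E'" "b \<in> cliques k (insert x V) E'"
  with extended_dist_walk[OF assms] show "(kstep k (insert x V) E')\<^sup>*\<^sup>* a b"
    by (blast intro: relpowp_imp_rtranclp)
qed

lemma elim_form_attach_equiv:
  assumes conn: "kconnected k V E" and k: "1 \<le> k" and cs: "distinct cs"
    and L: "cliques k (insert x V) E' \<subseteq> set cs" "B \<subseteq> set cs" "B \<inter> cliques k (insert x V) E' = {}"
    and t: "t \<in> new_cliques"
  shows "mat_equiv
    (mat_of_fun cs cs (elim_form k (cliques k (insert x V) E') B (\<lambda>a b. int (kdist k (insert x V) E' a b))))
    (mat_of_fun cs cs (elim_form k (cliques k V E) (insert t B) (\<lambda>a b. int (kdist k V E a b))))"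
proof -
  have sub: "cliques k V E \<subseteq> set cs" "new_cliques \<subseteq> set cs"
    using L(1) cliques_k_extend by auto
  have disj: "cliques k V E \<inter> new_cliques = {}" "cliques k V E \<inter> B = {}" "new_cliques \<inter> B = {}"
    using cliques_disjoint L(3) cliques_k_extend by auto
  have kd: "kdist k (insert x V) E' a b = extended_dist a b"
    if "a \<in> cliques k V E \<union> new_cliques" "b \<in> cliques k V E \<union> new_cliques" for a b
    using kdist_extend[OF conn] that cliques_k_extend by auto
  show ?thesis
    unfolding cliques_k_extend
    by (rule elim_form_extension_equiv[OF cs C_clique sub t card_new_cliques[OF k] disj])
      (use kd disj in \<open>auto simp: extended_dist_def\<close>)
qed

end

section \<open>The Smith normal form of the k-distance matrix\<close>

lemma smith_form_diag3:
  assumes "0 < c" "0 < d" "c dvd d"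
  shows "smith_form (diag3 a b c d)"
  unfolding smith_form_def
proof (intro conjI exI[of _ "a + b + 1"])
  have diag: "diag3 a b c d $$ (i, i) = (if i < a then 1 else if i < a + b then c else d)"
    if "i < a + b + 1" for i
    using that unfolding diag3_def by simp
  show "\<forall>i<a + b + 1. 0 < diag3 a b c d $$ (i, i)"
    using diag assms by simp
  show "\<forall>i. i + 1 < a + b + 1 \<longrightarrow> diag3 a b c d $$ (i, i) dvd diag3 a b c d $$ (i + 1, i + 1)"
    using diag assms by auto
qed (auto simp: diag3_def)

lemma is_SNF_of_iff: "is_SNF_of M S \<longleftrightarrow> smith_form S \<and> mat_equiv M S"
  unfolding is_SNF_of_def mat_equiv_def ..

lemma cliques_complete:
  assumes "finite V" "card V = k"
  shows "cliques k V (complete_edges V) = {V}"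
proof (intro equalityI subsetI)
  fix S assume "S \<in> cliques k V (complete_edges V)"
  then have "S \<subseteq> V" "card S = card V" using assms unfolding cliques_def by auto
  then show "S \<in> {V}" using assms card_subset_eq by blast
qed (use assms in \<open>auto simp: cliques_def is_clique_def complete_edges_def\<close>)

lemma ktree_invariants:
  assumes "ktree k V E" "1 \<le> k"
  shows "finite V \<and> k \<le> card V \<and> (\<forall>e\<in>E. e \<subseteq> V) \<and> kconnected k V E
    \<and> card (cliques k V E) = 1 + k * (card V - k)"
  using assms
proof (induction rule: ktree.induct)
  case (base V)
  then have "cliques k V (complete_edges V) = {V}" by (intro cliques_complete)
  then show ?case using base by (auto simp: kconnected_def complete_edges_def)
next
  case (step V E x C)
  then have IH: "finite V" "k \<le> card V" "\<forall>e\<in>E. e \<subseteq> V" "kconnected k V E"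
    "card (cliques k V E) = 1 + k * (card V - k)" by auto
  interpret ktree_step k V E x C
    using IH step.hyps by unfold_locales auto
  have "finite (cliques k V E)" "finite new_cliques"
    using IH(5) card_new_cliques[OF step.prems] step.prems by (auto intro: card_ge_0_finite)
  then have "card (cliques k (insert x V) E') = card (cliques k V E) + card new_cliques"
    unfolding cliques_k_extend by (intro card_Un_disjoint cliques_disjoint)
  also have "\<dots> = 1 + k * (card V - k) + k"
    using IH(5) card_new_cliques[OF step.prems] by simp
  also have "\<dots> = 1 + k * (card (insert x V) - k)"
    using IH(1,2) x_new by (simp add: Suc_diff_le algebra_simps)
  finally show ?case
    using IH C_V x_new kconnected_extend[OF IH(4)] by auto
qed

lemma kdist_mat_eq_elim_form:
  "kdist_mat k V E cs = mat_of_fun cs cs (elim_form k (set cs) {} (\<lambda>a b. int (kdist k V E a b)))"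
  by (rule eq_matI) (auto simp: kdist_mat_def elim_form_def)

lemma ktree_elim_form_reduction:
  assumes "ktree k V E" and k: "1 \<le> k" and cs: "distinct cs"
  shows "cliques k V E \<subseteq> set cs \<Longrightarrow> B \<subseteq> set cs \<Longrightarrow> B \<inter> cliques k V E = {} \<Longrightarrow>
    \<exists>c B'. c \<in> set cs \<and> B' \<subseteq> set cs \<and> c \<notin> B' \<and> card B' = card B + (card V - k) \<and>
      mat_equiv (mat_of_fun cs cs (elim_form k (cliques k V E) B (\<lambda>a b. int (kdist k V E a b))))
                (mat_of_fun cs cs (elim_form k {c} B' (\<lambda>_ _. 0)))"
  using assms(1)
proof (induction arbitrary: B rule: ktree.induct)
  case (base V)
  then have "cliques k V (complete_edges V) = {V}" by (intro cliques_complete)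
  moreover have "elim_form k {V} B (\<lambda>a b. int (kdist k V (complete_edges V) a b)) = elim_form k {V} B (\<lambda>_ _. 0)"
    by (intro ext) (simp add: elim_form_def)
  ultimately show ?case
    using base by (intro exI[of _ V] exI[of _ B]) (auto simp: mat_equiv_refl)
next
  case (step V E x C)
  have IH: "finite V" "k \<le> card V" "\<forall>e\<in>E. e \<subseteq> V" and conn: "kconnected k V E"
    using ktree_invariants[OF step.hyps(1) k] by auto
  interpret ktree_step k V E x C
    using IH step.hyps by unfold_locales auto
  obtain t where t: "t \<in> new_cliques"
    using card_new_cliques[OF k] k by (metis card.empty ex_in_conv not_one_le_zero)
  have "insert t B \<subseteq> set cs" "insert t B \<inter> cliques k V E = {}" "t \<notin> B"
    using step.prems t cliques_k_extend cliques_disjoint by auto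
  then obtain c B' where c: "c \<in> set cs" "B' \<subseteq> set cs" "c \<notin> B'"
    "card B' = card (insert t B) + (card V - k)"
    and reduced: "mat_equiv (mat_of_fun cs cs (elim_form k (cliques k V E) (insert t B) (\<lambda>a b. int (kdist k V E a b))))
               (mat_of_fun cs cs (elim_form k {c} B' (\<lambda>_ _. 0)))"
    using step.IH[of "insert t B"] step.prems(1) cliques_k_extend by blast
  have "card (insert t B) + (card V - k) = card B + (card (insert x V) - k)"
    using \<open>t \<notin> B\<close> finite_subset[OF step.prems(2)] IH(1,2) x_new by simp
  then show ?case
    using c mat_equiv_trans[OF elim_form_attach_equiv[OF conn k cs step.prems t] reduced] by auto
qed

theorem mainTheorem1:
  fixes k n :: nat and V :: "'a set" and E :: "'a set set" and cs :: "'a set list"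
  assumes "k \<ge> 1" and "n \<ge> k + 2"
    and "ktree k V E" and "card V = n"
    and "distinct cs" and "set cs = cliques k V E"
  shows "is_SNF_of (kdist_mat k V E cs)
           (diag3 ((k - 1) * (n - k) + 2) (n - k - 2) (int k + 1)
                  (int k * (int k + 1) * int (n - k)))"
proof -
  have len: "length cs = 1 + k * (n - k)"
    using ktree_invariants[OF assms(3,1)] distinct_card[OF assms(5)] assms(4,6) by simp
  obtain c B where c: "c \<in> set cs" "B \<subseteq> set cs" "c \<notin> B" "card B = n - k"
    and reduced: "mat_equiv (kdist_mat k V E cs) (mat_of_fun cs cs (elim_form k {c} B (\<lambda>_ _. 0)))"
    using ktree_elim_form_reduction[OF assms(3,1,5), of "{}"] assms(4,6)
    by (auto simp: kdist_mat_eq_elim_form)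
  have "length cs - card B + 1 = (k - 1) * (n - k) + 2"
  proof -
    have "n - k \<le> k * (n - k)" "(k - 1) * (n - k) = k * (n - k) - (n - k)"
      using assms(1) by (simp_all add: diff_mult_distrib)
    then show ?thesis using len c(4) by arith
  qed
  then have "mat_equiv (kdist_mat k V E cs)
      (diag3 ((k - 1) * (n - k) + 2) (n - k - 2) (int k + 1) (int k * (int k + 1) * int (n - k)))"
    using mat_equiv_trans[OF reduced elim_form_pivot_equiv_diag3[OF assms(5) c(1-3)]] assms(2) c(4)
    by simp
  moreover have "smith_form (diag3 ((k - 1) * (n - k) + 2) (n - k - 2) (int k + 1) (int k * (int k + 1) * int (n - k)))"
    using assms(1,2) by (intro smith_form_diag3) auto
  ultimately show ?thesis
    by (simp add: is_SNF_of_iff)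
qed

end
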